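(* Let $G$ be a countable disconnected graph. Suppose there is an infinite sequence $(H_n)_{n<\omega}$ of pairwise distinct non-trivial connected components of $G$ such that $H_n$ embeds into $H_m$ whenever $n\le m$. Then $G$ has infinitely many pairwise non-isomorphic disconnected siblings.
   Context: Graphs are undirected and loopless. $G$ embeds into $G'$ if $G$ is isomorphic to an induced subgraph of $G'$; $G,G'$ are equimorphic if each embeds into the other; a sibling of $G$ is a graph equimorphic to $G$. A connected component is trivial if it consists of a single vertex. *)

theory Defs
  imports Main "HOL-Library.Countable_Set"
begin

definition graph :: "'a set \<Rightarrow> ('a \<Rightarrow> 'a \<Rightarrow> bool) \<Rightarrow> bool" where
  "graph V E \<longleftrightarrow> (\<forall>x y. E x y \<longrightarrow> x \<in> V \<and> y \<in> V) \<and> (\<forall>x y. E x y \<longrightarrow> E y x) \<and> (\<forall>x. \<not> E x x)"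

definition embeds :: "'a set \<Rightarrow> ('a \<Rightarrow> 'a \<Rightarrow> bool) \<Rightarrow> 'b set \<Rightarrow> ('b \<Rightarrow> 'b \<Rightarrow> bool) \<Rightarrow> bool" where
  "embeds V E V' E' \<longleftrightarrow> (\<exists>f. inj_on f V \<and> f ` V \<subseteq> V' \<and>
      (\<forall>x\<in>V. \<forall>y\<in>V. E' (f x) (f y) \<longleftrightarrow> E x y))"

definition isomorphic :: "'a set \<Rightarrow> ('a \<Rightarrow> 'a \<Rightarrow> bool) \<Rightarrow> 'b set \<Rightarrow> ('b \<Rightarrow> 'b \<Rightarrow> bool) \<Rightarrow> bool" where
  "isomorphic V E V' E' \<longleftrightarrow> (\<exists>f. bij_betw f V V' \<and>
      (\<forall>x\<in>V. \<forall>y\<in>V. E' (f x) (f y) \<longleftrightarrow> E x y))"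

definition equimorphic :: "'a set \<Rightarrow> ('a \<Rightarrow> 'a \<Rightarrow> bool) \<Rightarrow> 'b set \<Rightarrow> ('b \<Rightarrow> 'b \<Rightarrow> bool) \<Rightarrow> bool" where
  "equimorphic V E V' E' \<longleftrightarrow> embeds V E V' E' \<and> embeds V' E' V E"

definition component :: "'a set \<Rightarrow> ('a \<Rightarrow> 'a \<Rightarrow> bool) \<Rightarrow> 'a set \<Rightarrow> bool" where
  "component V E C \<longleftrightarrow> (\<exists>x\<in>V. C = {y. E\<^sup>*\<^sup>* x y})"

definition disconnected :: "'a set \<Rightarrow> ('a \<Rightarrow> 'a \<Rightarrow> bool) \<Rightarrow> bool" where
  "disconnected V E \<longleftrightarrow> (\<exists>x\<in>V. \<exists>y\<in>V. \<not> E\<^sup>*\<^sup>* x y)"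

definition trivial_set :: "'a set \<Rightarrow> bool" where
  "trivial_set C \<longleftrightarrow> (\<exists>v. C = {v})"

end

theory Submission
  imports Defs
begin

(* Let I be the set of isolated vertices of G. For each k, let G_k be the induced subgraph
   obtained by deleting I and the components H_0, ..., H_(k-1) except for one chosen vertex
   of each of them. Then G_k has exactly k isolated vertices, so the G_k are pairwise
   non-isomorphic, and G_k is disconnected because H_k and H_(k+1) survive. Conversely G embeds
   into G_k: the j-th isolated vertex goes to the chosen vertex of H_(k+2j), the component H_n
   goes into H_(k+2n+1), and all other vertices stay where they are. Copying G_k onto a set of
   natural numbers gives the required siblings. *)

definition isolated :: "'a set \<Rightarrow> ('a \<Rightarrow> 'a \<Rightarrow> bool) \<Rightarrow> 'a set" where
  "isolated V E = {v \<in> V. \<forall>w \<in> V. \<not> E v w}"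

lemma isomorphic_card_isolated:
  assumes "isomorphic A EA B EB"
  shows "card (isolated A EA) = card (isolated B EB)"
proof -
  obtain f where f: "bij_betw f A B" and fE: "\<forall>x\<in>A. \<forall>y\<in>A. EB (f x) (f y) \<longleftrightarrow> EA x y"
    using assms unfolding isomorphic_def by blast
  have B: "B = f ` A"
    using f by (simp add: bij_betw_def)
  have iff: "v \<in> isolated A EA \<longleftrightarrow> f v \<in> isolated B EB" if "v \<in> A" for v
    using that fE by (simp add: isolated_def B)
  have "f ` isolated A EA = isolated B EB"
  proof (intro equalityI subsetI)
    fix b assume "b \<in> f ` isolated A EA"
    then show "b \<in> isolated B EB"
      using iff by (auto simp: isolated_def[of A])
  next
    fix b assume "b \<in> isolated B EB"
    moreover from this obtain v where "v \<in> A" "b = f v"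
      unfolding isolated_def B by blast
    ultimately show "b \<in> f ` isolated A EA"
      using iff by blast
  qed
  moreover have "isolated A EA \<subseteq> A"
    by (simp add: isolated_def)
  ultimately have "bij_betw f (isolated A EA) (isolated B EB)"
    by (rule bij_betw_subset[OF f, rotated])
  then show ?thesis
    by (rule bij_betw_same_card)
qed

lemma embeds_trans:
  assumes "embeds A EA B EB" and "embeds B EB C EC"
  shows "embeds A EA C EC"
proof -
  obtain f where f: "inj_on f A" "f ` A \<subseteq> B" "\<forall>x\<in>A. \<forall>y\<in>A. EB (f x) (f y) \<longleftrightarrow> EA x y"
    using assms(1) unfolding embeds_def by blast
  obtain g where g: "inj_on g B" "g ` B \<subseteq> C" "\<forall>x\<in>B. \<forall>y\<in>B. EC (g x) (g y) \<longleftrightarrow> EB x y"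
    using assms(2) unfolding embeds_def by blast
  have "inj_on (g \<circ> f) A"
    using f g by (blast intro: comp_inj_on inj_on_subset)
  with f g show ?thesis
    unfolding embeds_def by (intro exI[of _ "g \<circ> f"]) (auto simp: image_subset_iff)
qed

lemma embeds_subset: "A \<subseteq> B \<Longrightarrow> embeds A E B E"
  unfolding embeds_def by (intro exI[of _ id]) auto

lemma isomorphic_imp_equimorphic:
  assumes "isomorphic A EA B EB"
  shows "equimorphic A EA B EB"
proof -
  obtain f where f: "bij_betw f A B" and fE: "\<forall>x\<in>A. \<forall>y\<in>A. EB (f x) (f y) \<longleftrightarrow> EA x y"
    using assms unfolding isomorphic_def by blast
  define g where "g = inv_into A f"
  have g: "bij_betw g B A"
    unfolding g_def using f by (rule bij_betw_inv_into)
  have gE: "EA (g x) (g y) \<longleftrightarrow> EB x y" if "x \<in> B" "y \<in> B" for x y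
  proof -
    have "g x \<in> A" "g y \<in> A" "f (g x) = x" "f (g y) = y"
      using g f that unfolding g_def by (auto simp: bij_betwE bij_betw_inv_into_right)
    then show ?thesis
      using fE by metis
  qed
  have "embeds A EA B EB"
    unfolding embeds_def using f fE by (auto simp: bij_betw_def)
  moreover have "embeds B EB A EA"
    unfolding embeds_def using g gE by (auto simp: bij_betw_def)
  ultimately show ?thesis
    unfolding equimorphic_def ..
qed

lemma equimorphic_sym: "equimorphic A EA B EB \<Longrightarrow> equimorphic B EB A EA"
  unfolding equimorphic_def by blast

lemma equimorphic_trans: "equimorphic A EA B EB \<Longrightarrow> equimorphic B EB C EC \<Longrightarrow> equimorphic A EA C EC"
  unfolding equimorphic_def by (blast intro: embeds_trans)

lemma rtranclp_map:
  assumes "\<And>a b. R a b \<Longrightarrow> Q (h a) (h b)" and "R\<^sup>*\<^sup>* a b"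
  shows "Q\<^sup>*\<^sup>* (h a) (h b)"
  using assms(2) by induction (auto intro: rtranclp.rtrancl_into_rtrancl assms(1))

definition nat_vertices :: "'a set \<Rightarrow> nat set" where
  "nat_vertices A = to_nat_on A ` A"

definition nat_edges :: "'a set \<Rightarrow> ('a \<Rightarrow> 'a \<Rightarrow> bool) \<Rightarrow> nat \<Rightarrow> nat \<Rightarrow> bool" where
  "nat_edges A E a b \<longleftrightarrow> a \<in> nat_vertices A \<and> b \<in> nat_vertices A
     \<and> E (from_nat_into A a) (from_nat_into A b)"

lemma graph_nat_copy:
  assumes "\<And>x y. E x y \<Longrightarrow> E y x" and "\<And>x. \<not> E x x"
  shows "graph (nat_vertices A) (nat_edges A E)"
  using assms unfolding graph_def nat_edges_def by blast

lemma isomorphic_nat_copy: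
  assumes "countable A"
  shows "isomorphic A E (nat_vertices A) (nat_edges A E)"
  unfolding isomorphic_def
proof (intro exI conjI)
  show "bij_betw (to_nat_on A) A (nat_vertices A)"
    using assms unfolding nat_vertices_def by (simp add: bij_betw_def inj_on_to_nat_on)
  show "\<forall>x\<in>A. \<forall>y\<in>A. nat_edges A E (to_nat_on A x) (to_nat_on A y) \<longleftrightarrow> E x y"
    using assms unfolding nat_edges_def nat_vertices_def by simp
qed

lemma disconnected_nat_copy:
  assumes "countable A" and "disconnected A E"
  shows "disconnected (nat_vertices A) (nat_edges A E)"
proof -
  obtain x y where xy: "x \<in> A" "y \<in> A" "\<not> E\<^sup>*\<^sup>* x y"
    using assms(2) unfolding disconnected_def by blast
  have "\<not> (nat_edges A E)\<^sup>*\<^sup>* (to_nat_on A x) (to_nat_on A y)"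
  proof
    assume "(nat_edges A E)\<^sup>*\<^sup>* (to_nat_on A x) (to_nat_on A y)"
    then have "E\<^sup>*\<^sup>* (from_nat_into A (to_nat_on A x)) (from_nat_into A (to_nat_on A y))"
      by (rule rtranclp_map[rotated]) (simp add: nat_edges_def)
    then show False
      using assms(1) xy by simp
  qed
  then show ?thesis
    using xy unfolding disconnected_def nat_vertices_def by blast
qed

(* \<beta> and \<gamma> label the blocks (unions of components) of the two graphs, and f maps each
   block of A into the block of B with the same label. *)
lemma embeds_blockwise:
  fixes f :: "'a \<Rightarrow> 'b" and \<beta> :: "'a \<Rightarrow> 'l" and \<gamma> :: "'b \<Rightarrow> 'l"
  assumes "f ` A \<subseteq> B"
    and block: "\<And>x. x \<in> A \<Longrightarrow> \<gamma> (f x) = \<beta> x"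
    and "\<And>x y. x \<in> A \<Longrightarrow> y \<in> A \<Longrightarrow> E x y \<Longrightarrow> \<beta> x = \<beta> y"
    and "\<And>x y. E' x y \<Longrightarrow> \<gamma> x = \<gamma> y"
    and "\<And>x y. x \<in> A \<Longrightarrow> y \<in> A \<Longrightarrow> \<beta> x = \<beta> y \<Longrightarrow> f x = f y \<Longrightarrow> x = y"
    and "\<And>x y. x \<in> A \<Longrightarrow> y \<in> A \<Longrightarrow> \<beta> x = \<beta> y \<Longrightarrow> E' (f x) (f y) \<longleftrightarrow> E x y"
  shows "embeds A E B E'"
  unfolding embeds_def
proof (intro exI conjI ballI)
  show "inj_on f A"
  proof (rule inj_onI)
    fix x y assume "x \<in> A" "y \<in> A" "f x = f y"
    moreover from this have "\<beta> x = \<beta> y"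
      using block by metis
    ultimately show "x = y"
      using assms(5) by blast
  qed
  show "f ` A \<subseteq> B"
    by (fact assms(1))
  fix x y assume xy: "x \<in> A" "y \<in> A"
  show "E' (f x) (f y) \<longleftrightarrow> E x y"
  proof (cases "\<beta> x = \<beta> y")
    case True
    then show ?thesis
      using xy assms(6) by blast
  next
    case False
    then have "\<gamma> (f x) \<noteq> \<gamma> (f y)"
      using xy block by simp
    then show ?thesis
      using False xy assms(3,4) by blast
  qed
qed

lemma graph_rtranclp_sym:
  assumes "graph V E" and "E\<^sup>*\<^sup>* x y"
  shows "E\<^sup>*\<^sup>* y x"
proof -
  have "symp E"
    using assms(1) unfolding graph_def by (blast intro: sympI)
  then show ?thesis
    using assms(2) by (blast dest: sympD[OF symp_rtranclp])
qed

lemma component_eq_reachable: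
  assumes "graph V E" and "component V E C" and "z \<in> C"
  shows "C = {y. E\<^sup>*\<^sup>* z y}"
proof -
  obtain x where C: "C = {y. E\<^sup>*\<^sup>* x y}"
    using assms(2) unfolding component_def by blast
  then have "E\<^sup>*\<^sup>* x z" "E\<^sup>*\<^sup>* z x"
    using assms(1,3) graph_rtranclp_sym by auto
  then show ?thesis
    unfolding C by (auto intro: rtranclp_trans)
qed

lemma component_closed: "component V E C \<Longrightarrow> v \<in> C \<Longrightarrow> E\<^sup>*\<^sup>* v w \<Longrightarrow> w \<in> C"
  unfolding component_def by (auto intro: rtranclp_trans)

lemma component_subset:
  assumes "graph V E" and "component V E C"
  shows "C \<subseteq> V"
proof
  fix y assume "y \<in> C"
  obtain x where "x \<in> V" "E\<^sup>*\<^sup>* x y"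
    using assms(2) \<open>y \<in> C\<close> unfolding component_def by blast
  from \<open>E\<^sup>*\<^sup>* x y\<close> show "y \<in> V"
    by (cases rule: rtranclp.cases) (use \<open>x \<in> V\<close> assms(1) in \<open>auto simp: graph_def\<close>)
qed

lemma components_disjoint:
  "graph V E \<Longrightarrow> component V E C \<Longrightarrow> component V E D \<Longrightarrow> C \<noteq> D \<Longrightarrow> C \<inter> D = {}"
  using component_eq_reachable[of V E C] component_eq_reachable[of V E D] by blast

lemma nontrivial_component_has_edge:
  assumes "graph V E" and "component V E C" and "\<not> trivial_set C" and "v \<in> C"
  shows "\<exists>w. E v w"
proof -
  obtain w where "w \<in> C" "w \<noteq> v"
    using assms(3,4) unfolding trivial_set_def by blast
  then have "E\<^sup>*\<^sup>* v w" "w \<noteq> v"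
    using component_eq_reachable[OF assms(1,2,4)] by auto
  then show ?thesis
    by (auto elim: converse_rtranclpE)
qed

locale component_chain =
  fixes V :: "'a set" and E :: "'a \<Rightarrow> 'a \<Rightarrow> bool" and H :: "nat \<Rightarrow> 'a set"
  assumes graph: "graph V E" and countable_V: "countable V" and inj_H: "inj H"
    and component_H: "\<And>n. component V E (H n)" and nontrivial_H: "\<And>n. \<not> trivial_set (H n)"
    and embeds_H: "\<And>n m. n \<le> m \<Longrightarrow> embeds (H n) E (H m) E"
begin

lemma edge_sym: "E x y \<Longrightarrow> E y x"
  using graph unfolding graph_def by blast

lemma edge_irrefl: "\<not> E x x"
  using graph unfolding graph_def by blast

lemma edge_in_V: "E x y \<Longrightarrow> x \<in> V \<and> y \<in> V"
  using graph unfolding graph_def by blast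

lemma isolated_iff: "v \<in> isolated V E \<longleftrightarrow> v \<in> V \<and> (\<forall>w. \<not> E v w)"
  using edge_in_V unfolding isolated_def by blast

lemma H_subset: "H n \<subseteq> V"
  using component_subset[OF graph component_H] .

lemma H_disjoint: "n \<noteq> m \<Longrightarrow> H n \<inter> H m = {}"
  using components_disjoint[OF graph component_H component_H] inj_H unfolding inj_def by blast

lemma H_closed: "v \<in> H n \<Longrightarrow> E v w \<Longrightarrow> w \<in> H n"
  using component_closed[OF component_H] by blast

lemma H_not_isolated: "v \<in> H n \<Longrightarrow> v \<notin> isolated V E"
  using nontrivial_component_has_edge[OF graph component_H nontrivial_H] isolated_iff by blast

definition H_point :: "nat \<Rightarrow> 'a" where
  "H_point n = (SOME v. v \<in> H n)"

lemma H_point: "H_point n \<in> H n"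
proof -
  have "\<exists>v. v \<in> H n"
    using component_H[of n] unfolding component_def by auto
  then show ?thesis
    unfolding H_point_def by (rule someI_ex)
qed

lemma inj_H_point: "inj H_point"
proof (rule injI)
  fix n m assume "H_point n = H_point m"
  then have "H n \<inter> H m \<noteq> {}"
    using H_point[of n] H_point[of m] by auto
  then show "n = m"
    using H_disjoint by blast
qed

definition H_emb :: "nat \<Rightarrow> nat \<Rightarrow> 'a \<Rightarrow> 'a" where
  "H_emb n m = (SOME f. inj_on f (H n) \<and> f ` H n \<subseteq> H m
                  \<and> (\<forall>x\<in>H n. \<forall>y\<in>H n. E (f x) (f y) \<longleftrightarrow> E x y))"

lemma H_emb:
  assumes "n \<le> m"
  shows "inj_on (H_emb n m) (H n) \<and> H_emb n m ` H n \<subseteq> H m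
    \<and> (\<forall>x\<in>H n. \<forall>y\<in>H n. E (H_emb n m x) (H_emb n m y) \<longleftrightarrow> E x y)"
  unfolding H_emb_def using embeds_H[OF assms] unfolding embeds_def by (rule someI_ex)

definition H_index :: "'a \<Rightarrow> nat option" where
  "H_index v = (if \<exists>n. v \<in> H n then Some (THE n. v \<in> H n) else None)"

lemma H_index_eq_Some: "H_index v = Some n \<longleftrightarrow> v \<in> H n"
proof -
  have index: "H_index v = Some m" if "v \<in> H m" for m
  proof -
    have "(THE n. v \<in> H n) = m"
      using that H_disjoint by (intro the_equality) blast+
    then show ?thesis
      using that unfolding H_index_def by auto
  qed
  show ?thesis
  proof
    assume "H_index v = Some n"
    moreover obtain m where "v \<in> H m"
      using calculation unfolding H_index_def by (auto split: if_splits)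
    ultimately show "v \<in> H n"
      using index by simp
  qed (rule index)
qed

lemma H_index_eq_None: "H_index v = None \<longleftrightarrow> (\<forall>n. v \<notin> H n)"
  unfolding H_index_def by simp

lemma H_index_edge:
  assumes "E x y"
  shows "H_index x = H_index y"
proof -
  have "x \<in> H n \<longleftrightarrow> y \<in> H n" for n
    using assms H_closed edge_sym by blast
  then show ?thesis
    unfolding H_index_def by simp
qed

definition iso_index :: "'a \<Rightarrow> nat" where
  "iso_index = to_nat_on (isolated V E)"

definition shift :: "nat \<Rightarrow> 'a \<Rightarrow> 'a" where
  "shift k v = (if v \<in> isolated V E then H_point (k + 2 * iso_index v)
     else case H_index v of Some n \<Rightarrow> H_emb n (k + 2 * n + 1) v | None \<Rightarrow> v)"

definition shift_index :: "nat \<Rightarrow> 'a \<Rightarrow> nat option" where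
  "shift_index k v = (if v \<in> isolated V E then Some (k + 2 * iso_index v)
     else map_option (\<lambda>n. k + 2 * n + 1) (H_index v))"

lemma H_index_shift: "H_index (shift k v) = shift_index k v"
proof (cases "v \<in> isolated V E")
  case True
  then show ?thesis
    unfolding shift_def shift_index_def by (simp add: H_index_eq_Some H_point)
next
  case False
  show ?thesis
  proof (cases "H_index v")
    case None
    then show ?thesis
      using False unfolding shift_def shift_index_def by simp
  next
    case (Some n)
    then have "H_emb n (k + 2 * n + 1) v \<in> H (k + 2 * n + 1)"
      using H_emb[of n "k + 2 * n + 1"] by (auto simp: H_index_eq_Some)
    then have "H_index (H_emb n (k + 2 * n + 1) v) = Some (k + 2 * n + 1)"
      by (simp add: H_index_eq_Some)
    then show ?thesis
      using False Some unfolding shift_def shift_index_def by simp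
  qed
qed

lemma shift_index_edge:
  assumes "E x y"
  shows "shift_index k x = shift_index k y"
proof -
  have "x \<notin> isolated V E" "y \<notin> isolated V E"
    using assms edge_sym isolated_iff by blast+
  then show ?thesis
    unfolding shift_index_def using H_index_edge[OF assms] by simp
qed

lemma shift_on_block:
  assumes "shift_index k x = shift_index k y"
  shows "(shift k x = shift k y \<longrightarrow> x = y) \<and> (E (shift k x) (shift k y) \<longleftrightarrow> E x y)"
proof -
  have parity: "k + 2 * a \<noteq> k + 2 * b + 1" "k + 2 * b + 1 \<noteq> k + 2 * a" for a b :: nat
    by presburger+
  consider (isolated) "x \<in> isolated V E" "y \<in> isolated V E"
    | (component) n where "x \<notin> isolated V E" "y \<notin> isolated V E"
        "H_index x = Some n" "H_index y = Some n"
    | (rest) "x \<notin> isolated V E" "y \<notin> isolated V E" "H_index x = None" "H_index y = None"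
    using assms parity unfolding shift_index_def
    by (cases "H_index x"; cases "H_index y") (auto split: if_splits)
  then show ?thesis
  proof cases
    case isolated
    then have "iso_index x = iso_index y"
      using assms unfolding shift_index_def by simp
    moreover have "inj_on iso_index (isolated V E)"
      unfolding iso_index_def
      by (rule inj_on_to_nat_on) (metis countable_V countable_subset isolated_iff subsetI)
    ultimately have "x = y"
      using isolated by (meson inj_onD)
    then show ?thesis
      by (simp add: edge_irrefl)
  next
    case component
    then have "shift k x = H_emb n (k + 2 * n + 1) x" "shift k y = H_emb n (k + 2 * n + 1) y"
      unfolding shift_def by simp_all
    moreover have "x \<in> H n" "y \<in> H n"
      using component by (simp_all add: H_index_eq_Some)
    moreover have "inj_on (H_emb n (k + 2 * n + 1)) (H n)"
      and "\<forall>x\<in>H n. \<forall>y\<in>H n. E (H_emb n (k + 2 * n + 1) x) (H_emb n (k + 2 * n + 1) y) \<longleftrightarrow> E x y"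
      using H_emb[of n "k + 2 * n + 1"] by simp_all
    ultimately show ?thesis
      by (simp add: inj_on_eq_iff)
  next
    case rest
    then show ?thesis
      unfolding shift_def by simp
  qed
qed

definition sibling :: "nat \<Rightarrow> 'a set" where
  "sibling k = (V - isolated V E - (\<Union>i<k. H i)) \<union> H_point ` {..<k}"

lemma sibling_subset: "sibling k \<subseteq> V"
  unfolding sibling_def using H_point H_subset by blast

lemma countable_sibling: "countable (sibling k)"
  using countable_subset[OF sibling_subset countable_V] .

lemma in_sibling_if_in_late_H:
  assumes "v \<in> H j" and "k \<le> j"
  shows "v \<in> sibling k"
proof -
  have "v \<notin> H i" if "i < k" for i
    using assms H_disjoint[of i j] that by auto
  then show ?thesis
    unfolding sibling_def using assms(1) H_subset H_not_isolated by blast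
qed

lemma shift_in_sibling:
  assumes "v \<in> V"
  shows "shift k v \<in> sibling k"
proof (cases "shift_index k v")
  case None
  then have "v \<notin> isolated V E" "H_index v = None"
    unfolding shift_index_def by (auto split: if_splits)
  moreover from this have "shift k v = v"
    unfolding shift_def by simp
  moreover have "\<forall>n. v \<notin> H n"
    using calculation H_index_eq_None by blast
  ultimately show ?thesis
    unfolding sibling_def using assms by auto
next
  case (Some j)
  then have "shift k v \<in> H j"
    using H_index_shift H_index_eq_Some by metis
  moreover have "k \<le> j"
    using Some unfolding shift_index_def by (auto split: if_splits)
  ultimately show ?thesis
    by (rule in_sibling_if_in_late_H)
qed

lemma embeds_sibling: "embeds V E (sibling k) E"
proof (rule embeds_blockwise[where f = "shift k" and \<beta> = "shift_index k" and \<gamma> = H_index])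
  show "shift k ` V \<subseteq> sibling k"
    using shift_in_sibling by blast
  show "H_index (shift k x) = shift_index k x" for x
    by (rule H_index_shift)
  show "shift_index k x = shift_index k y" if "x \<in> V" "y \<in> V" "E x y" for x y
    using that(3) by (rule shift_index_edge)
  show "H_index x = H_index y" if "E x y" for x y
    using that by (rule H_index_edge)
  show "x = y" if "x \<in> V" "y \<in> V" "shift_index k x = shift_index k y" "shift k x = shift k y"
    for x y
    using shift_on_block that by blast
  show "E (shift k x) (shift k y) \<longleftrightarrow> E x y"
    if "x \<in> V" "y \<in> V" "shift_index k x = shift_index k y" for x y
    using shift_on_block that by blast
qed

lemma equimorphic_sibling: "equimorphic (sibling k) E V E"
  unfolding equimorphic_def using embeds_subset[OF sibling_subset] embeds_sibling by blast

lemma isolated_sibling: "isolated (sibling k) E = H_point ` {..<k}"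
proof (intro equalityI subsetI)
  fix v assume v: "v \<in> isolated (sibling k) E"
  show "v \<in> H_point ` {..<k}"
  proof (rule ccontr)
    assume "v \<notin> H_point ` {..<k}"
    then have "v \<in> V" "v \<notin> isolated V E" "\<forall>i<k. v \<notin> H i"
      using v unfolding isolated_def sibling_def by auto
    then obtain w where "E v w"
      using isolated_iff by blast
    have "w \<in> V" "w \<notin> isolated V E"
      using \<open>E v w\<close> edge_in_V edge_sym isolated_iff by blast+
    moreover have "w \<notin> H i" if "i < k" for i
      using \<open>E v w\<close> \<open>\<forall>i<k. v \<notin> H i\<close> that edge_sym H_closed by blast
    ultimately have "w \<in> sibling k"
      unfolding sibling_def by blast
    with \<open>E v w\<close> show False
      using v unfolding isolated_def by blast
  qed
next
  fix v assume "v \<in> H_point ` {..<k}"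
  then obtain i where i: "i < k" "v = H_point i"
    by blast
  have "\<not> E v w" if w: "w \<in> sibling k" for w
  proof
    assume "E v w"
    then have "w \<in> H i"
      using H_closed H_point i(2) by blast
    then obtain j where "w = H_point j"
      using w i(1) unfolding sibling_def by blast
    then have "j = i"
      using \<open>w \<in> H i\<close> H_point[of j] H_disjoint[of j i] by auto
    then show False
      using \<open>E v w\<close> \<open>w = H_point j\<close> i(2) edge_irrefl by simp
  qed
  moreover have "v \<in> sibling k"
    using i unfolding sibling_def by blast
  ultimately show "v \<in> isolated (sibling k) E"
    unfolding isolated_def by blast
qed

lemma card_isolated_sibling: "card (isolated (sibling k) E) = k"
  unfolding isolated_sibling using inj_on_subset[OF inj_H_point subset_UNIV] by (simp add: card_image)

lemma disconnected_sibling: "disconnected (sibling k) E"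
proof -
  have "H_point k \<in> sibling k" "H_point (Suc k) \<in> sibling k"
    by (rule in_sibling_if_in_late_H[OF H_point], simp)+
  moreover have "\<not> E\<^sup>*\<^sup>* (H_point k) (H_point (Suc k))"
  proof
    assume "E\<^sup>*\<^sup>* (H_point k) (H_point (Suc k))"
    then have "H_point (Suc k) \<in> H k"
      by (rule component_closed[OF component_H H_point])
    then show False
      using H_point[of "Suc k"] H_disjoint[of k "Suc k"] by auto
  qed
  ultimately show ?thesis
    unfolding disconnected_def by blast
qed

end

theorem lemma2p3:
  fixes V :: "'a set" and E :: "'a \<Rightarrow> 'a \<Rightarrow> bool" and H :: "nat \<Rightarrow> 'a set"
  assumes "graph V E" and "countable V" and "disconnected V E"
    and "inj H"
    and "\<And>n. component V E (H n)" and "\<And>n. \<not> trivial_set (H n)"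
    and "\<And>n m. n \<le> m \<Longrightarrow> embeds (H n) E (H m) E"
  shows "\<exists>S :: nat \<Rightarrow> nat set \<times> (nat \<Rightarrow> nat \<Rightarrow> bool).
           (\<forall>i. graph (fst (S i)) (snd (S i)) \<and> disconnected (fst (S i)) (snd (S i))
                 \<and> equimorphic (fst (S i)) (snd (S i)) V E)
         \<and> (\<forall>i j. i \<noteq> j \<longrightarrow> \<not> isomorphic (fst (S i)) (snd (S i)) (fst (S j)) (snd (S j)))"
proof -
  (* the hypothesis disconnected V E is implied by the others and not needed *)
  interpret component_chain V E H
    using assms(1,2,4-7) by unfold_locales
  define S where "S k = (nat_vertices (sibling k), nat_edges (sibling k) E)" for k
  have iso: "isomorphic (sibling k) E (fst (S k)) (snd (S k))" for k
    unfolding S_def using isomorphic_nat_copy[OF countable_sibling] by simp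
  have card: "card (isolated (fst (S k)) (snd (S k))) = k" for k
    using isomorphic_card_isolated[OF iso] card_isolated_sibling by simp
  have "\<not> isomorphic (fst (S i)) (snd (S i)) (fst (S j)) (snd (S j))" if "i \<noteq> j" for i j
    using isomorphic_card_isolated[of "fst (S i)" "snd (S i)" "fst (S j)" "snd (S j)"] card that
    by auto
  moreover have "graph (fst (S k)) (snd (S k))" for k
    unfolding S_def using graph_nat_copy[of E, OF edge_sym edge_irrefl] by simp
  moreover have "disconnected (fst (S k)) (snd (S k))" for k
    unfolding S_def using disconnected_nat_copy[OF countable_sibling disconnected_sibling] by simp
  moreover have "equimorphic (fst (S k)) (snd (S k)) V E" for k
    using equimorphic_trans[OF equimorphic_sym[OF isomorphic_imp_equimorphic[OF iso]]
        equimorphic_sibling] .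
  ultimately show ?thesis
    by (intro exI[of _ S]) blast
qed

end
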